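(* Let $x$ be a $\theta$-cyclic point such that $G_x$ has exactly $k$ critical cuts, and let $U$ be a critical cut of $G_x$. Then $G_x^U$ (with the point $x^U$) has at most $k-1$ critical cuts.
   Context: $\mathrm{SUBT}(K_n)=\{x\in[0,1]^{E_n}: x(\delta(\{i\}))=2\ \forall i,\ x(\delta(U))\ge2\ \forall\,\emptyset\ne U\subsetneq V_n\}$ where $K_n$ is the complete graph on $V_n=\{1,\ldots,n\}$ with edge set $E_n$ and $\delta(U)$ is the set of edges with exactly one endpoint in $U$. $G_x=(V_n,E_x)$, $E_x=\{e:x_e>0\}$. A $\theta$-cyclic point ($0<\theta\le\frac12$) is $x\in\mathrm{SUBT}(K_n)\cap\{0,\theta,1-\theta,1\}^{E_n}$ with $G_x$ of maximum degree at most 3 and every vertex incident to an edge of $x$-value 1. A cut $U$ of a graph with vertex set $V$ is proper if $|U|\ge2$ and $|V\setminus U|\ge2$. A critical cut is a proper cut $U$ with $|\delta(U)|=3$, exactly one edge of $\delta(U)$ of $x$-value 1, and the edges of $\delta(U)$ having pairwise distinct endpoints in $U$ and pairwise distinct endpoints outside $U$; a cut and its complement are regarded as the same cut. $G_x^U$ is obtained from $G_x$ by identifying all vertices of $V_n\setminus U$ into a single vertex and deleting loops; $x^U$ assigns each edge of $G_x^U$ its $x$-value. *)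

theory Defs
  imports Complex_Main
begin

definition Vn :: "nat \<Rightarrow> nat set" where
  "Vn n = {1..n}"

definition En :: "nat \<Rightarrow> nat set set" where
  "En n = {e. e \<subseteq> Vn n \<and> card e = 2}"

definition delta :: "'a set set \<Rightarrow> 'a set \<Rightarrow> 'a set set" where
  "delta E U = {e \<in> E. card (e \<inter> U) = 1}"

definition SUBT :: "nat \<Rightarrow> (nat set \<Rightarrow> real) set" where
  "SUBT n = {x. (\<forall>e\<in>En n. 0 \<le> x e \<and> x e \<le> 1)
              \<and> (\<forall>i\<in>Vn n. (\<Sum>e\<in>delta (En n) {i}. x e) = 2)
              \<and> (\<forall>U. U \<noteq> {} \<and> U \<subset> Vn n \<longrightarrow> (\<Sum>e\<in>delta (En n) U. x e) \<ge> 2)}"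

definition Ex :: "nat \<Rightarrow> (nat set \<Rightarrow> real) \<Rightarrow> nat set set" where
  "Ex n x = {e \<in> En n. x e > 0}"

definition theta_cyclic :: "nat \<Rightarrow> real \<Rightarrow> (nat set \<Rightarrow> real) \<Rightarrow> bool" where
  "theta_cyclic n \<theta> x \<longleftrightarrow>
     0 < \<theta> \<and> \<theta> \<le> 1/2 \<and> x \<in> SUBT n
     \<and> (\<forall>e\<in>En n. x e \<in> {0, \<theta>, 1 - \<theta>, 1})
     \<and> (\<forall>i\<in>Vn n. card {e \<in> Ex n x. i \<in> e} \<le> 3)
     \<and> (\<forall>i\<in>Vn n. \<exists>e\<in>En n. i \<in> e \<and> x e = 1)"

definition critical_cut :: "'a set \<Rightarrow> 'a set set \<Rightarrow> ('a set \<Rightarrow> real) \<Rightarrow> 'a set \<Rightarrow> bool" where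
  "critical_cut V E x U \<longleftrightarrow>
     U \<subseteq> V \<and> card U \<ge> 2 \<and> card (V - U) \<ge> 2
     \<and> card (delta E U) = 3
     \<and> card {e \<in> delta E U. x e = 1} = 1
     \<and> inj_on (\<lambda>e. the_elem (e \<inter> U)) (delta E U)
     \<and> inj_on (\<lambda>e. the_elem (e - U)) (delta E U)"

definition critical_cuts :: "'a set \<Rightarrow> 'a set set \<Rightarrow> ('a set \<Rightarrow> real) \<Rightarrow> 'a set set set" where
  "critical_cuts V E x = {{U, V - U} | U. critical_cut V E x U}"

text \<open>Contraction of V - U into the single (new) vertex w; loops are deleted.\<close>
definition cmap :: "'a set \<Rightarrow> 'a \<Rightarrow> 'a \<Rightarrow> 'a" where
  "cmap U w v = (if v \<in> U then v else w)"

definition contr_V :: "'a set \<Rightarrow> 'a \<Rightarrow> 'a set" where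
  "contr_V U w = insert w U"

definition contr_E :: "'a set set \<Rightarrow> 'a set \<Rightarrow> 'a \<Rightarrow> 'a set set" where
  "contr_E E U w = {cmap U w ` e | e. e \<in> E \<and> card (cmap U w ` e) = 2}"

text \<open>x^U gives each edge of the contracted graph the x-value of an edge it comes from
  (unique when U is a critical cut, since then no parallel edges arise).\<close>
definition contr_x :: "'a set set \<Rightarrow> ('a set \<Rightarrow> real) \<Rightarrow> 'a set \<Rightarrow> 'a \<Rightarrow> 'a set \<Rightarrow> real" where
  "contr_x E x U w e' = x (SOME e. e \<in> E \<and> cmap U w ` e = e')"

end

theory Submission imports Defs begin

text \<open>
  Every critical cut of the contracted graph \<open>G\<^sub>x\<^sup>U\<close> has a side \<open>W\<close> avoiding the
  contracted vertex, so \<open>W \<subseteq> U\<close>. Contracting \<open>V - U\<close> does not change the edges leaving \<open>W\<close>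
  except for renaming their outer endpoints, and since the edges of \<open>\<delta>(U)\<close> have distinct
  endpoints in \<open>U\<close>, this renaming is injective on \<open>\<delta>(W)\<close>; hence \<open>W\<close> is already a critical cut
  of \<open>G\<^sub>x\<close>. This gives an injection from the critical cuts of \<open>G\<^sub>x\<^sup>U\<close> into those of \<open>G\<^sub>x\<close>,
  and \<open>U\<close> itself is not in its image because its contracted complement is a single vertex.
\<close>

definition edges_on :: "'a set \<Rightarrow> 'a set set \<Rightarrow> bool" where
  "edges_on V E \<longleftrightarrow> (\<forall>e\<in>E. e \<subseteq> V \<and> card e = 2)"

lemma card_Int_doubleton_eq_1:
  assumes "a \<noteq> b"
  shows "card ({a, b} \<inter> W) = 1 \<longleftrightarrow> (a \<in> W) \<noteq> (b \<in> W)"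
  using assms by (cases "a \<in> W"; cases "b \<in> W") (auto simp: Int_insert_left)

lemma edges_on_obtain_doubleton:
  assumes "edges_on V E" "e \<in> E"
  obtains a b where "e = {a, b}" "a \<noteq> b" "a \<in> V" "b \<in> V"
  using assms unfolding edges_on_def by (metis card_2_iff insert_subset)

lemma delta_obtain_crossing:
  assumes "edges_on V E" "e \<in> delta E W"
  obtains a b where "e = {a, b}" "a \<noteq> b" "a \<in> W" "b \<notin> W"
proof -
  from assms(2) have "e \<in> E" "card (e \<inter> W) = 1" unfolding delta_def by auto
  with assms(1) obtain a b where "e = {a, b}" "a \<noteq> b"
    by (elim edges_on_obtain_doubleton)
  with \<open>card (e \<inter> W) = 1\<close> show thesis
    using that card_Int_doubleton_eq_1[of a b W] by (metis insert_commute)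
qed

lemma delta_Diff_eq:
  assumes "edges_on V E"
  shows "delta E (V - U) = delta E U"
  unfolding delta_def
proof (intro Collect_cong conj_cong refl)
  fix e assume "e \<in> E"
  with assms obtain a b where "e = {a, b}" "a \<noteq> b" "a \<in> V" "b \<in> V"
    by (elim edges_on_obtain_doubleton)
  then show "card (e \<inter> (V - U)) = 1 \<longleftrightarrow> card (e \<inter> U) = 1"
    using card_Int_doubleton_eq_1[of a b] by auto
qed

lemma critical_cut_Diff:
  assumes E: "edges_on V E" and U: "critical_cut V E x U"
  shows "critical_cut V E x (V - U)"
proof -
  have d: "delta E (V - U) = delta E U"
    using E by (rule delta_Diff_eq)
  have "e \<inter> (V - U) = e - U" "e - (V - U) = e \<inter> U" if "e \<in> delta E U" for e
    using E that unfolding delta_def edges_on_def by auto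
  then have "inj_on (\<lambda>e. the_elem (e \<inter> (V - U))) (delta E (V - U))"
      and "inj_on (\<lambda>e. the_elem (e - (V - U))) (delta E (V - U))"
    using U unfolding d critical_cut_def by (simp_all cong: inj_on_cong)
  moreover have "V - (V - U) = U"
    using U unfolding critical_cut_def by auto
  ultimately show ?thesis
    using U d unfolding critical_cut_def by auto
qed

lemma finite_critical_cuts:
  assumes "finite V"
  shows "finite (critical_cuts V E x)"
  by (rule finite_subset[of _ "Pow (Pow V)"])
    (auto simp: critical_cuts_def critical_cut_def assms)

lemma critical_cuts_subset_avoiding:
  assumes "edges_on V E"
  shows "critical_cuts V E x \<subseteq> (\<lambda>W. {W, V - W}) ` {W. critical_cut V E x W \<and> w \<notin> W}"
proof
  fix C assume "C \<in> critical_cuts V E x"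
  then obtain U where C: "C = {U, V - U}" and U: "critical_cut V E x U"
    unfolding critical_cuts_def by auto
  have "V - (V - U) = U"
    using U unfolding critical_cut_def by auto
  then have C': "C = {V - U, V - (V - U)}"
    using C by auto
  show "C \<in> (\<lambda>W. {W, V - W}) ` {W. critical_cut V E x W \<and> w \<notin> W}"
  proof (cases "w \<in> U")
    case True
    with C' critical_cut_Diff[OF assms U] show ?thesis
      by (intro image_eqI[where x = "V - U"]) auto
  next
    case False
    with C U show ?thesis
      by (intro image_eqI[where x = U]) auto
  qed
qed

lemma edges_on_contr_E: "edges_on (contr_V U w) (contr_E E U w)"
  unfolding edges_on_def contr_E_def contr_V_def cmap_def by auto

lemma Int_cmap_image:
  assumes "W \<subseteq> U" "w \<notin> W"
  shows "cmap U w ` e \<inter> W = e \<inter> W"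
  using assms unfolding cmap_def by auto

lemma Diff_cmap_image:
  assumes "W \<subseteq> U" "w \<notin> W"
  shows "cmap U w ` e - W = cmap U w ` (e - W)"
  using assms unfolding cmap_def by auto

text \<open>Two edges of \<open>\<delta>(W)\<close> with the same endpoint in \<open>W\<close> can only merge under the
  contraction if both lie in \<open>\<delta>(U)\<close>, where they are separated by their endpoints in \<open>U\<close>.\<close>

lemma inj_on_cmap_image_delta:
  assumes E: "edges_on V E" and w: "w \<notin> V" and UV: "U \<subseteq> V" and WU: "W \<subseteq> U"
    and injU: "inj_on (\<lambda>e. the_elem (e \<inter> U)) (delta E U)"
  shows "inj_on (image (cmap U w)) (delta E W)"
proof
  fix e1 e2 assume e1: "e1 \<in> delta E W" and e2: "e2 \<in> delta E W"
    and eq: "cmap U w ` e1 = cmap U w ` e2"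
  obtain a1 b1 where p1: "e1 = {a1, b1}" "a1 \<noteq> b1" "a1 \<in> W" "b1 \<notin> W"
    using E e1 by (rule delta_obtain_crossing)
  obtain a2 b2 where p2: "e2 = {a2, b2}" "a2 \<noteq> b2" "a2 \<in> W" "b2 \<notin> W"
    using E e2 by (rule delta_obtain_crossing)
  have wW: "w \<notin> W" using w UV WU by auto
  have "e1 \<inter> W = e2 \<inter> W"
    using eq Int_cmap_image[OF WU wW] by metis
  then have a: "a1 = a2"
    using p1 p2 by auto
  have aU: "a1 \<in> U" using p1 WU by auto
  show "e1 = e2"
  proof (cases "b1 \<in> U")
    case True
    then have "cmap U w ` e1 = e1" "w \<notin> cmap U w ` e1"
      using p1 aU w UV unfolding cmap_def by auto
    then have "b2 \<in> U"
      using eq p2 unfolding cmap_def by (auto split: if_splits)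
    then have "cmap U w ` e2 = e2"
      using p2 WU unfolding cmap_def by auto
    with \<open>cmap U w ` e1 = e1\<close> eq show ?thesis by simp
  next
    case False
    then have "w \<in> cmap U w ` e2"
      using eq p1 unfolding cmap_def by auto
    then have "b2 \<notin> U"
      using p2 WU w UV unfolding cmap_def by (auto split: if_splits)
    with False p1 p2 aU a have "e1 \<in> delta E U" "e2 \<in> delta E U"
        and "the_elem (e1 \<inter> U) = the_elem (e2 \<inter> U)"
      using e1 e2 card_Int_doubleton_eq_1 unfolding delta_def by auto
    then show ?thesis using injU by (metis inj_onD)
  qed
qed

lemma delta_contr_E:
  assumes E: "edges_on V E" and w: "w \<notin> V" and UV: "U \<subseteq> V" and WU: "W \<subseteq> U"
  shows "delta (contr_E E U w) W = image (cmap U w) ` delta E W"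
proof (intro equalityI subsetI)
  have wW: "w \<notin> W" using w UV WU by auto
  fix e' assume "e' \<in> delta (contr_E E U w) W"
  then obtain e where "e \<in> E" "e' = cmap U w ` e" "card (e' \<inter> W) = 1"
    unfolding delta_def contr_E_def by auto
  then show "e' \<in> image (cmap U w) ` delta E W"
    using Int_cmap_image[OF WU wW] unfolding delta_def by auto
next
  have wW: "w \<notin> W" using w UV WU by auto
  fix e' assume "e' \<in> image (cmap U w) ` delta E W"
  then obtain e where e: "e \<in> delta E W" "e' = cmap U w ` e" by auto
  obtain a b where p: "e = {a, b}" "a \<noteq> b" "a \<in> W" "b \<notin> W"
    using E e(1) by (rule delta_obtain_crossing)
  have "cmap U w a = a" "cmap U w b \<noteq> a"
    using p WU w UV unfolding cmap_def by auto
  then have "card e' = 2"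
    using e(2) p(1) by simp
  with e show "e' \<in> delta (contr_E E U w) W"
    using Int_cmap_image[OF WU wW] unfolding delta_def contr_E_def by auto
qed

lemma contr_x_cmap_image:
  assumes inj: "inj_on (image (cmap U w)) (delta E W)" and WU: "W \<subseteq> U" "w \<notin> W"
    and e: "e \<in> delta E W"
  shows "contr_x E x U w (cmap U w ` e) = x e"
proof -
  define e' where "e' = (SOME e'. e' \<in> E \<and> cmap U w ` e' = cmap U w ` e)"
  have "\<exists>e'. e' \<in> E \<and> cmap U w ` e' = cmap U w ` e"
    using e unfolding delta_def by auto
  then have e': "e' \<in> E" "cmap U w ` e' = cmap U w ` e"
    unfolding e'_def by (metis (mono_tags, lifting) someI_ex)+
  then have "e' \<inter> W = e \<inter> W"
    using Int_cmap_image[OF WU] by metis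
  with e e' have "e' \<in> delta E W"
    unfolding delta_def by auto
  with e e' inj have "e' = e"
    by (metis inj_onD)
  then show ?thesis
    unfolding contr_x_def e'_def by simp
qed

lemma critical_cut_of_contr:
  assumes E: "edges_on V E" and fin: "finite V" and w: "w \<notin> V"
    and U: "critical_cut V E x U" and WU: "W \<subseteq> U"
    and W: "critical_cut (contr_V U w) (contr_E E U w) (contr_x E x U w) W"
  shows "critical_cut V E x W"
proof -
  let ?f = "image (cmap U w)"
  have UV: "U \<subseteq> V" and VU: "card (V - U) \<ge> 2"
    using U unfolding critical_cut_def by auto
  have wW: "w \<notin> W" using w UV WU by auto
  have inj: "inj_on ?f (delta E W)"
    using E w UV WU U unfolding critical_cut_def by (intro inj_on_cmap_image_delta) auto
  have dW: "delta (contr_E E U w) W = ?f ` delta E W"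
    using E w UV WU by (rule delta_contr_E)
  have "{e \<in> delta (contr_E E U w) W. contr_x E x U w e = 1} = ?f ` {e \<in> delta E W. x e = 1}"
    unfolding dW using contr_x_cmap_image[OF inj WU wW] by auto
  then have one: "card {e \<in> delta E W. x e = 1} = 1"
    using W card_image[OF inj_on_subset[OF inj]] unfolding critical_cut_def
    by (metis (no_types, lifting) mem_Collect_eq subsetI)
  have "the_elem (?f e \<inter> W) = the_elem (e \<inter> W)" for e
    using Int_cmap_image[OF WU wW] by simp
  then have "inj_on (\<lambda>e. the_elem (e \<inter> W)) (delta E W)"
    using W inj comp_inj_on[OF inj, of "\<lambda>e'. the_elem (e' \<inter> W)"]
    unfolding critical_cut_def dW by (simp add: comp_def)
  moreover have "the_elem (?f e - W) = cmap U w (the_elem (e - W))"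
    if e: "e \<in> delta E W" for e
  proof -
    obtain a b where "e = {a, b}" "a \<in> W" "b \<notin> W"
      using E e by (rule delta_obtain_crossing)
    then have "e - W = {b}" by auto
    then show ?thesis using Diff_cmap_image[OF WU wW] by simp
  qed
  then have "inj_on (cmap U w \<circ> (\<lambda>e. the_elem (e - W))) (delta E W)"
    using W inj comp_inj_on[OF inj, of "\<lambda>e'. the_elem (e' - W)"]
    unfolding critical_cut_def dW by (simp add: comp_def cong: inj_on_cong)
  then have "inj_on (\<lambda>e. the_elem (e - W)) (delta E W)"
    by (rule inj_on_imageI2)
  moreover have "card (V - W) \<ge> 2"
    using VU card_mono[of "V - W" "V - U"] fin WU by (meson Diff_mono finite_Diff le_trans order_refl)
  ultimately show ?thesis
    using W one UV WU card_image[OF inj] unfolding critical_cut_def dW by auto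
qed

lemma card_critical_cuts_contr_le:
  assumes E: "edges_on V E" and fin: "finite V" and w: "w \<notin> V"
    and U: "critical_cut V E x U"
  shows "card (critical_cuts (contr_V U w) (contr_E E U w) (contr_x E x U w))
           \<le> card (critical_cuts V E x) - 1"
proof -
  let ?V' = "contr_V U w" and ?E' = "contr_E E U w" and ?x' = "contr_x E x U w"
  define S where "S = {W. critical_cut ?V' ?E' ?x' W \<and> w \<notin> W}"
  have UV: "U \<subseteq> V" and VU: "card (V - U) \<ge> 2"
    using U unfolding critical_cut_def by auto
  have finV': "finite ?V'"
    using fin UV finite_subset unfolding contr_V_def by auto
  have "S \<subseteq> Pow ?V'"
    unfolding S_def critical_cut_def by blast
  then have finS: "finite S"
    using finV' finite_subset by blast
  have SU: "W \<subseteq> U" if "W \<in> S" for W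
    using that unfolding S_def contr_V_def critical_cut_def by auto
  have "card (critical_cuts ?V' ?E' ?x') \<le> card ((\<lambda>W. {W, ?V' - W}) ` S)"
    using critical_cuts_subset_avoiding[OF edges_on_contr_E] finS
    unfolding S_def by (intro card_mono finite_imageI)
  also have "\<dots> \<le> card S"
    by (rule card_image_le[OF finS])
  also have "\<dots> = card ((\<lambda>W. {W, V - W}) ` S)"
  proof (rule card_image[symmetric], rule inj_onI)
    fix W1 W2 assume W: "W1 \<in> S" "W2 \<in> S" and eq: "{W1, V - W1} = {W2, V - W2}"
    show "W1 = W2"
    proof (rule ccontr)
      assume "W1 \<noteq> W2"
      with eq have "W1 = V - W2"
        by (auto simp: doubleton_eq_iff)
      with SU[OF W(1)] SU[OF W(2)] UV have "V - U = {}"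
        by auto
      with VU show False by simp
    qed
  qed
  also have "\<dots> \<le> card (critical_cuts V E x - {{U, V - U}})"
  proof (rule card_mono)
    show "finite (critical_cuts V E x - {{U, V - U}})"
      using finite_critical_cuts[OF fin] by simp
    have "{W, V - W} \<in> critical_cuts V E x" "{W, V - W} \<noteq> {U, V - U}" if W: "W \<in> S" for W
    proof -
      have "critical_cut ?V' ?E' ?x' W" using W unfolding S_def by simp
      then show "{W, V - W} \<in> critical_cuts V E x"
        using critical_cut_of_contr[OF E fin w U SU[OF W]] unfolding critical_cuts_def by auto
      have "?V' - U = {w}"
        using w UV unfolding contr_V_def by auto
      then have "W \<noteq> U"
        using \<open>critical_cut ?V' ?E' ?x' W\<close> unfolding critical_cut_def by auto
      moreover have "W \<noteq> V - U"
        using SU[OF W] VU by (metis Diff_disjoint card.empty inf.absorb_iff2 not_numeral_le_zero)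
      ultimately show "{W, V - W} \<noteq> {U, V - U}"
        by (auto simp: doubleton_eq_iff)
    qed
    then show "(\<lambda>W. {W, V - W}) ` S \<subseteq> critical_cuts V E x - {{U, V - U}}"
      by auto
  qed
  also have "\<dots> = card (critical_cuts V E x) - 1"
    using U by (intro card_Diff_singleton) (auto simp: critical_cuts_def)
  finally show ?thesis .
qed

theorem mainTheorem12:
  fixes n k :: nat and \<theta> :: real and x :: "nat set \<Rightarrow> real" and U :: "nat set"
  assumes "theta_cyclic n \<theta> x"
    and "card (critical_cuts (Vn n) (Ex n x) x) = k"
    and "critical_cut (Vn n) (Ex n x) x U"
  shows "card (critical_cuts (contr_V U 0) (contr_E (Ex n x) U 0) (contr_x (Ex n x) x U 0)) \<le> k - 1"
proof -
  have "edges_on (Vn n) (Ex n x)"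
    unfolding edges_on_def Ex_def En_def by auto
  moreover have "finite (Vn n)" "0 \<notin> Vn n"
    unfolding Vn_def by auto
  ultimately show ?thesis
    using card_critical_cuts_contr_le[OF _ _ _ assms(3)] assms(2) by simp
qed

end
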